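(* For every integer $n\ge1$ there are real constants $c_{kj}$, $1\le k\le n$, $1\le j\le n+1$, such that for every $w,w_0\in\mathbb{C}$ the following identity holds: $$\langle w^n(w-w_0)\rangle=\langle w_0w^n\rangle+\langle w_0^n(w-w_0)\rangle+\sum_{k=1}^n\sum_{j=1}^{n+1}c_{kj}\langle w_0\rangle^{n+1-j}\int_0^1\langle w-w_0t\rangle^j(1-t)^{k-1}\,dt.$$
   Context: For $w\in\mathbb{C}\setminus\{0\}$, $\langle w\rangle:=\overline w/w$ denotes the phase function; the identity is understood for $w,w_0$ such that the phase functions involved are defined (in particular $w_0\ne0$, $w\ne0$, $w\ne w_0$). *)

theory Defs
  imports "HOL-Analysis.Analysis"
begin

definition phase :: "complex \<Rightarrow> complex" where
  "phase w = cnj w / w"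

end

theory Submission
  imports Defs
begin

text \<open>
  Write w = w0 b and p = phase w0. For real t \<noteq> b one has phase (w - w0 t) = p (1 + K t) with
  K t = (cnj b - b) / (b - t) = phase_kernel b t, and K is continuous on the whole real line (it vanishes when b is
  real). An elementary antiderivative gives the moment formula
  integral over [0, 1] of K(t)^(k+1) (1-t)^(k-1) = K(0)^k K(1) / k, where K(0) = phase w / p - 1 and
  K(1) = phase (w - w0) / p - 1. Expanding K^(k+1) = ((1 + K) - 1)^(k+1) binomially expresses the
  moment through the integrals of phase (w - w0 t)^j (1-t)^(k-1), and summing over k with weights
  k (n choose k) reassembles phase w^n phase (w - w0) - p phase w^n - p^n phase (w - w0) by the
  binomial theorem.
\<close>

lemma phase_mult: "phase (x * y) = phase x * phase y"
  by (simp add: phase_def)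

lemma phase_power: "phase (x ^ m) = phase x ^ m"
  by (simp add: phase_def power_divide)

lemma phase_eq_0_iff [simp]: "phase z = 0 \<longleftrightarrow> z = 0"
  by (simp add: phase_def)

definition phase_kernel :: "complex \<Rightarrow> real \<Rightarrow> complex" where
  "phase_kernel a t = (cnj a - a) / (a - of_real t)"

lemma phase_diff_of_real:
  assumes "a \<noteq> of_real t"
  shows "phase (a - of_real t) = 1 + phase_kernel a t"
  using assms by (simp add: phase_def phase_kernel_def field_simps)

lemma phase_diff_mult_of_real:
  assumes "w0 \<noteq> 0" "of_real t \<noteq> w / w0"
  shows "phase (w - w0 * of_real t) = phase w0 * (1 + phase_kernel (w / w0) t)"
proof -
  have "w - w0 * of_real t = w0 * (w / w0 - of_real t)"
    using assms(1) by (simp add: algebra_simps)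
  then show ?thesis using assms(2) by (simp add: phase_mult phase_diff_of_real)
qed

lemma phase_kernel_real: "a \<in> \<real> \<Longrightarrow> phase_kernel a t = 0"
  by (simp add: phase_kernel_def Reals_cnj_iff)

lemma continuous_on_phase_kernel: "continuous_on S (phase_kernel a)"
proof (cases "a \<in> \<real>")
  case True
  then show ?thesis by (simp add: phase_kernel_real)
next
  case False
  then have "a - of_real t \<noteq> 0" for t by auto
  then show ?thesis unfolding phase_kernel_def by (intro continuous_intros) auto
qed

lemma has_integral_one_minus_power:
  assumes "k \<ge> 1"
  shows "((\<lambda>t::real. complex_of_real ((1 - t) ^ (k - 1))) has_integral 1 / of_nat k) {0..1}"
proof -
  define F where "F z = - ((1 - z) ^ k) / of_nat k" for z :: complex
  have F_deriv: "(F has_field_derivative (1 - z) ^ (k - 1)) (at z)" for z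
    using assms unfolding F_def by (auto intro!: derivative_eq_intros simp: field_simps)
  have "((\<lambda>t::real. F (of_real t)) has_vector_derivative
               complex_of_real ((1 - t) ^ (k - 1))) (at t within {0..1})" for t
    using has_vector_derivative_real_field[OF F_deriv[of "of_real t"]] by simp
  from fundamental_theorem_of_calculus[OF _ this]
  show ?thesis using assms by (simp add: F_def zero_power)
qed

lemma has_field_derivative_moebius_power:
  fixes a z :: complex
  assumes "a - z \<noteq> 0" "a \<noteq> 1" "k \<ge> 1"
  shows "((\<lambda>z. ((1 - z) / (a - z)) ^ k / (of_nat k * (1 - a)))
          has_field_derivative (1 - z) ^ (k - 1) / (a - z) ^ (k + 1)) (at z)"
proof -
  have "((\<lambda>z. (1 - z) / (a - z)) has_field_derivative (1 - a) / (a - z)\<^sup>2) (at z)"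
    using assms(1) by (auto intro!: derivative_eq_intros simp: power2_eq_square field_simps)
  then have deriv: "((\<lambda>z. ((1 - z) / (a - z)) ^ k / (of_nat k * (1 - a))) has_field_derivative
      of_nat k * ((1 - a) / (a - z)\<^sup>2 * ((1 - z) / (a - z)) ^ (k - Suc 0)) / (of_nat k * (1 - a))) (at z)"
    by (intro DERIV_cdivide DERIV_power)
  have "of_nat k \<noteq> (0::complex)" "1 - a \<noteq> 0"
    using assms(2,3) by auto
  then have "of_nat k * ((1 - a) / (a - z)\<^sup>2 * ((1 - z) / (a - z)) ^ (k - Suc 0))
      / (of_nat k * (1 - a)) = (1 - z) ^ (k - 1) / ((a - z) ^ (k - 1) * (a - z)\<^sup>2)"
    by (simp add: power_divide)
  also have "(a - z) ^ (k - 1) * (a - z)\<^sup>2 = (a - z) ^ (k + 1)"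
  proof -
    have "k + 1 = (k - 1) + 2" using assms(3) by simp
    then show ?thesis by (simp only: power_add)
  qed
  finally show ?thesis using deriv by simp
qed

lemma has_integral_one_minus_power_div_power:
  fixes a :: complex
  assumes "a \<notin> \<real>" and "k \<ge> 1"
  shows "((\<lambda>t::real. complex_of_real ((1 - t) ^ (k - 1)) / (a - of_real t) ^ (k + 1))
          has_integral 1 / (of_nat k * a ^ k * (a - 1))) {0..1}"
proof -
  have "a \<noteq> 0" "a \<noteq> 1" using assms(1) by auto
  define F where "F z = ((1 - z) / (a - z)) ^ k / (of_nat k * (1 - a))" for z :: complex
  have "a - of_real t \<noteq> 0" for t using assms(1) by auto
  then have "((\<lambda>t::real. F (of_real t)) has_vector_derivative
               complex_of_real ((1 - t) ^ (k - 1)) / (a - of_real t) ^ (k + 1)) (at t within {0..1})"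
    for t
    using has_vector_derivative_real_field[OF has_field_derivative_moebius_power, of a "of_real t" k]
      \<open>a \<noteq> 1\<close> assms(2)
    by (simp add: F_def)
  from fundamental_theorem_of_calculus[OF _ this]
  have "((\<lambda>t::real. complex_of_real ((1 - t) ^ (k - 1)) / (a - of_real t) ^ (k + 1))
          has_integral F 1 - F 0) {0..1}"
    by simp
  moreover have "F 1 - F 0 = 1 / (of_nat k * a ^ k * (a - 1))"
  proof -
    have "F 1 = 0"
      using assms(2) by (simp add: F_def zero_power)
    moreover have "F 0 = 1 / (a ^ k * (of_nat k * (1 - a)))"
      by (simp add: F_def power_divide)
    ultimately show ?thesis
      using assms(2) \<open>a \<noteq> 0\<close> \<open>a \<noteq> 1\<close> by (simp add: field_simps)
  qed
  ultimately show ?thesis by simp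
qed

lemma has_integral_phase_kernel_power:
  assumes "k \<ge> 1"
  shows "((\<lambda>t. phase_kernel a t ^ Suc k * complex_of_real ((1 - t) ^ (k - 1)))
          has_integral phase_kernel a 0 ^ k * phase_kernel a 1 / of_nat k) {0..1}"
proof (cases "a \<in> \<real>")
  case True
  then show ?thesis using assms by (simp add: phase_kernel_real zero_power)
next
  case False
  then have "a \<noteq> 0" "a \<noteq> 1" by auto
  define d where "d = cnj a - a"
  have "((\<lambda>t. d ^ (k + 1) * (complex_of_real ((1 - t) ^ (k - 1)) / (a - of_real t) ^ (k + 1)))
          has_integral d ^ (k + 1) * (1 / (of_nat k * a ^ k * (a - 1)))) {0..1}"
    by (intro has_integral_mult_right has_integral_one_minus_power_div_power False assms)
  moreover have "d ^ (k + 1) * (1 / (of_nat k * a ^ k * (a - 1)))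
      = phase_kernel a 0 ^ k * phase_kernel a 1 / of_nat k"
    using \<open>a \<noteq> 0\<close> \<open>a \<noteq> 1\<close> by (simp add: phase_kernel_def d_def power_divide field_simps)
  ultimately show ?thesis
    by (simp add: phase_kernel_def d_def power_divide)
qed

lemma sum_binomial_from_1:
  fixes x :: "'a::comm_ring_1"
  shows "(\<Sum>k = 1..n. of_nat (n choose k) * x ^ k) = (1 + x) ^ n - 1"
proof -
  have "(x + 1) ^ n = (\<Sum>k\<le>n. of_nat (n choose k) * x ^ k)"
    by (simp add: binomial_ring)
  also have "\<dots> = 1 + (\<Sum>k = 1..n. of_nat (n choose k) * x ^ k)"
    by (simp add: atMost_atLeast0 sum.atLeast_Suc_atMost)
  finally show ?thesis by (simp add: add.commute)
qed

lemma sum_binomial_shifted_power: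
  fixes h :: "'a::comm_ring_1"
  assumes "Suc k \<le> m"
  shows "(\<Sum>j = 1..m. of_nat (Suc k choose j) * h ^ j * (-1) ^ (Suc k - j))
         = (h - 1) ^ Suc k - (-1) ^ Suc k"
proof -
  have "(h + (-1)) ^ Suc k = (\<Sum>j\<le>Suc k. of_nat (Suc k choose j) * h ^ j * (-1) ^ (Suc k - j))"
    by (rule binomial_ring)
  also have "\<dots> = (-1) ^ Suc k + (\<Sum>j = 1..Suc k. of_nat (Suc k choose j) * h ^ j * (-1) ^ (Suc k - j))"
    by (simp add: atMost_atLeast0 sum.atLeast_Suc_atMost del: sum.cl_ivl_Suc)
  also have "(\<Sum>j = 1..Suc k. of_nat (Suc k choose j) * h ^ j * (-1) ^ (Suc k - j))
      = (\<Sum>j = 1..m. of_nat (Suc k choose j) * h ^ j * (-1) ^ (Suc k - j))"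
    by (rule sum.mono_neutral_left) (use assms in \<open>auto simp: binomial_eq_0\<close>)
  finally show ?thesis by simp
qed

lemma sum_binomial_shifted_power_scaled:
  fixes p h r :: "'a::comm_ring_1"
  assumes "Suc k \<le> m"
  shows "(\<Sum>j = 1..m. of_nat (Suc k choose j) * (-1) ^ (Suc k - j) * p ^ (m - j) * ((p * h) ^ j * r))
         = p ^ m * ((h - 1) ^ Suc k - (-1) ^ Suc k) * r"
proof -
  have "(\<Sum>j = 1..m. of_nat (Suc k choose j) * (-1) ^ (Suc k - j) * p ^ (m - j) * ((p * h) ^ j * r))
      = p ^ m * r * (\<Sum>j = 1..m. of_nat (Suc k choose j) * h ^ j * (-1) ^ (Suc k - j))"
    unfolding sum_distrib_left
  proof (rule sum.cong[OF refl])
    fix j assume "j \<in> {1..m}"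
    then have "p ^ (m - j) * p ^ j = p ^ m" by (simp flip: power_add)
    then show "of_nat (Suc k choose j) * (-1) ^ (Suc k - j) * p ^ (m - j) * ((p * h) ^ j * r)
        = p ^ m * r * (of_nat (Suc k choose j) * h ^ j * (-1) ^ (Suc k - j))"
      by (simp add: power_mult_distrib mult_ac flip: \<open>p ^ (m - j) * p ^ j = p ^ m\<close>)
  qed
  also have "\<dots> = p ^ m * r * ((h - 1) ^ Suc k - (-1) ^ Suc k)"
    by (simp only: sum_binomial_shifted_power[OF assms])
  finally show ?thesis by (simp only: mult_ac)
qed

lemma sum_binomial_from_1_combination:
  fixes x y :: "'a::comm_ring_1"
  assumes "n \<ge> 1"
  shows "(\<Sum>k = 1..n. of_nat (n choose k) * (x ^ k * y - (-1) ^ Suc k)) = ((1 + x) ^ n - 1) * y - 1"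
proof -
  have "(\<Sum>k = 1..n. of_nat (n choose k) * (-1) ^ k) = (1 + (-1 :: 'a)) ^ n - 1"
    by (rule sum_binomial_from_1)
  then have "(\<Sum>k = 1..n. of_nat (n choose k) * (-1) ^ Suc k) = (1 :: 'a)"
    using assms by (simp add: sum_negf power_0_left)
  then have "(\<Sum>k = 1..n. of_nat (n choose k) * (x ^ k * y - (-1) ^ Suc k))
      = (\<Sum>k = 1..n. of_nat (n choose k) * x ^ k) * y - 1"
    by (simp only: right_diff_distrib sum_subtractf sum_distrib_right mult.assoc)
  then show ?thesis by (simp only: sum_binomial_from_1)
qed

lemma phase_moment_identity:
  assumes "w0 \<noteq> 0" "w \<noteq> 0" "w \<noteq> w0" "k \<ge> 1" "Suc k \<le> m"
  shows "(\<Sum>j = 1..m. of_nat (Suc k choose j) * (-1) ^ (Suc k - j) * phase w0 ^ (m - j) *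
            integral {0..1} (\<lambda>t. phase (w - w0 * of_real t) ^ j * of_real ((1 - t) ^ (k - 1))))
         = phase w0 ^ m * ((phase w / phase w0 - 1) ^ k * (phase (w - w0) / phase w0 - 1)
                            - (-1) ^ Suc k) / of_nat k"
proof -
  define b where "b = w / w0"
  define p where "p = phase w0"
  define r where "r t = complex_of_real ((1 - t) ^ (k - 1))" for t :: real
  define G where "G t = p * (1 + phase_kernel b t)" for t
  have "p \<noteq> 0" using assms(1) by (simp add: p_def)
  have "b \<noteq> 0" "b \<noteq> 1" using assms(1-3) by (auto simp: b_def)
  note phase_shift = phase_diff_mult_of_real[OF assms(1), of _ w, folded b_def p_def]
  have kernel_0: "phase w / p - 1 = phase_kernel b 0"
    using phase_shift[of 0] \<open>b \<noteq> 0\<close> \<open>p \<noteq> 0\<close> by (simp add: G_def)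
  have kernel_1: "phase (w - w0) / p - 1 = phase_kernel b 1"
    using phase_shift[of 1] \<open>b \<noteq> 1\<close> \<open>p \<noteq> 0\<close> by (simp add: G_def)
  have integral_eq: "integral {0..1} (\<lambda>t. phase (w - w0 * of_real t) ^ j * r t)
      = integral {0..1} (\<lambda>t. G t ^ j * r t)" for j
  proof (rule integral_spike)
    show "negligible {t. of_real t = b}"
      by (rule negligible_subset[of "{Re b}"]) auto
  qed (use phase_shift in \<open>auto simp: G_def\<close>)
  have "(\<lambda>t. G t ^ j * r t) integrable_on {0..1}" for j
    unfolding G_def r_def
    by (intro integrable_continuous_real continuous_intros continuous_on_phase_kernel)
  then have integral_sum:
    "((\<lambda>t. \<Sum>j = 1..m. of_nat (Suc k choose j) * (-1) ^ (Suc k - j) * p ^ (m - j) * (G t ^ j * r t))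
      has_integral (\<Sum>j = 1..m. of_nat (Suc k choose j) * (-1) ^ (Suc k - j) * p ^ (m - j) *
                      integral {0..1} (\<lambda>t. G t ^ j * r t))) {0..1}"
    by (intro has_integral_sum has_integral_mult_right integrable_integral) simp
  have integral_closed_form:
    "((\<lambda>t. \<Sum>j = 1..m. of_nat (Suc k choose j) * (-1) ^ (Suc k - j) * p ^ (m - j) * (G t ^ j * r t))
      has_integral p ^ m * (phase_kernel b 0 ^ k * phase_kernel b 1 / of_nat k - (-1) ^ Suc k * (1 / of_nat k)))
      {0..1}"
    unfolding G_def sum_binomial_shifted_power_scaled[OF assms(5)]
    unfolding r_def add_diff_cancel_left' right_diff_distrib left_diff_distrib mult.assoc
    by (intro has_integral_mult_right has_integral_diff has_integral_phase_kernel_power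
        has_integral_one_minus_power assms(4))
  show ?thesis
    using has_integral_unique[OF integral_sum integral_closed_form] assms(4)
    unfolding p_def[symmetric] integral_eq[unfolded r_def] kernel_0 kernel_1
    by (simp add: r_def) (simp add: field_simps)
qed

lemma phase_product_expansion:
  assumes "w0 \<noteq> 0" "w \<noteq> 0" "w \<noteq> w0" "n \<ge> 1"
  shows "(\<Sum>k = 1..n. of_nat (n choose k) * of_nat k *
           (\<Sum>j = 1..n + 1. of_nat (Suc k choose j) * (-1) ^ (Suc k - j) * phase w0 ^ (n + 1 - j) *
              integral {0..1} (\<lambda>t. phase (w - w0 * of_real t) ^ j * of_real ((1 - t) ^ (k - 1)))))
         = phase (w ^ n * (w - w0)) - phase (w0 * w ^ n) - phase (w0 ^ n * (w - w0))"
proof -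
  define p where "p = phase w0"
  define x where "x = phase w / p - 1"
  define y where "y = phase (w - w0) / p - 1"
  have "p \<noteq> 0" using assms(1) by (simp add: p_def)
  have "(\<Sum>k = 1..n. of_nat (n choose k) * of_nat k *
           (\<Sum>j = 1..n + 1. of_nat (Suc k choose j) * (-1) ^ (Suc k - j) * phase w0 ^ (n + 1 - j) *
              integral {0..1} (\<lambda>t. phase (w - w0 * of_real t) ^ j * of_real ((1 - t) ^ (k - 1)))))
      = (\<Sum>k = 1..n. p ^ (n + 1) * (of_nat (n choose k) * (x ^ k * y - (-1) ^ Suc k)))"
    (is "sum ?lhs _ = sum ?rhs _")
  proof (rule sum.cong[OF refl])
    fix k assume "k \<in> {1..n}"
    then show "?lhs k = ?rhs k"
      using phase_moment_identity[OF assms(1-3), of k "n + 1"] by (simp add: p_def x_def y_def)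
  qed
  also have "\<dots> = p ^ (n + 1) * (((1 + x) ^ n - 1) * y - 1)"
    by (simp only: sum_binomial_from_1_combination[OF assms(4)] flip: sum_distrib_left)
  also have "\<dots> = phase w ^ n * phase (w - w0) - p * phase w ^ n - p ^ n * phase (w - w0)"
    using \<open>p \<noteq> 0\<close> by (simp add: x_def y_def power_divide field_simps)
  also have "\<dots> = phase (w ^ n * (w - w0)) - phase (w0 * w ^ n) - phase (w0 ^ n * (w - w0))"
    by (simp add: phase_mult phase_power p_def)
  finally show ?thesis .
qed

theorem lemma3p8:
  fixes n :: nat
  assumes "n \<ge> 1"
  shows "\<exists>c :: nat \<Rightarrow> nat \<Rightarrow> real. \<forall>w w0 :: complex.
           w0 \<noteq> 0 \<longrightarrow> w \<noteq> 0 \<longrightarrow> w \<noteq> w0 \<longrightarrow>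
           phase (w ^ n * (w - w0)) =
             phase (w0 * w ^ n) + phase (w0 ^ n * (w - w0)) +
             (\<Sum>k = 1..n. \<Sum>j = 1..n + 1.
                complex_of_real (c k j) * phase w0 ^ (n + 1 - j) *
                integral {0..1} (\<lambda>t::real. phase (w - w0 * complex_of_real t) ^ j *
                                            complex_of_real ((1 - t) ^ (k - 1))))"
proof (intro exI allI impI)
  fix w w0 :: complex
  assume "w0 \<noteq> 0" "w \<noteq> 0" "w \<noteq> w0"
  define c where "c k j = real (n choose k) * real k * real (Suc k choose j) * (-1) ^ (Suc k - j)"
    for k j
  have "(\<Sum>k = 1..n. \<Sum>j = 1..n + 1. complex_of_real (c k j) * phase w0 ^ (n + 1 - j) *
           integral {0..1} (\<lambda>t. phase (w - w0 * of_real t) ^ j * of_real ((1 - t) ^ (k - 1))))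
      = (\<Sum>k = 1..n. of_nat (n choose k) * of_nat k *
           (\<Sum>j = 1..n + 1. of_nat (Suc k choose j) * (-1) ^ (Suc k - j) * phase w0 ^ (n + 1 - j) *
              integral {0..1} (\<lambda>t. phase (w - w0 * of_real t) ^ j * of_real ((1 - t) ^ (k - 1)))))"
    unfolding sum_distrib_left by (intro sum.cong refl) (simp add: c_def mult_ac)
  then show "phase (w ^ n * (w - w0)) = phase (w0 * w ^ n) + phase (w0 ^ n * (w - w0)) +
      (\<Sum>k = 1..n. \<Sum>j = 1..n + 1. complex_of_real (c k j) * phase w0 ^ (n + 1 - j) *
           integral {0..1} (\<lambda>t. phase (w - w0 * of_real t) ^ j * of_real ((1 - t) ^ (k - 1))))"
    using phase_product_expansion[OF \<open>w0 \<noteq> 0\<close> \<open>w \<noteq> 0\<close> \<open>w \<noteq> w0\<close> assms] by simp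
qed

end
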